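(* There exist constants $\delta_1>0$ and $D_3<\infty$ such that for all $u\in\mathbb U$ and all $t\ge0$, $$\|x(t,u)-\pi\|_2\le D_3e^{-\delta_1t}\|u-\pi\|_2 .$$
   Context: Fix integers $C\ge1$, $d\ge1$ and a real $\sigma>0$. Let $\mathbb U=\{u\in\mathbb R^{C+1}:1=u_0\ge u_1\ge\cdots\ge u_C\ge0\}$ with Euclidean norm $\|\cdot\|_2$. For $u\in\mathbb U$, $x(t,u)$ is the unique solution of $x(0,u)=u$, $\frac d{dt}x_0=0$, $\frac{d}{dt}x_n=\sigma(x_{n-1}^d-x_n^d)-n(x_n-x_{n+1})$ for $1\le n\le C$, with $x_{C+1}\equiv0$. $\pi\in\mathbb U$ is the unique fixed point of this ODE in $\mathbb U$: $\pi_0=1$ and $\sigma(\pi_{n-1}^d-\pi_n^d)=n(\pi_n-\pi_{n+1})$ for $1\le n\le C$, with $\pi_{C+1}=0$. *)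

theory Defs
  imports "HOL-Analysis.Analysis"
begin

text \<open>Vectors in R^(C+1) are represented as functions nat => real; only indices 0..C matter.\<close>

definition inU :: "nat \<Rightarrow> (nat \<Rightarrow> real) \<Rightarrow> bool" where
  "inU C u \<longleftrightarrow> u 0 = 1 \<and> (\<forall>n<C. u (Suc n) \<le> u n) \<and> u C \<ge> 0"

definition comp :: "nat \<Rightarrow> (nat \<Rightarrow> real) \<Rightarrow> nat \<Rightarrow> real" where
  "comp C y n = (if n \<le> C then y n else 0)"

definition drift :: "nat \<Rightarrow> nat \<Rightarrow> real \<Rightarrow> (nat \<Rightarrow> real) \<Rightarrow> nat \<Rightarrow> real" where
  "drift C d \<sigma> y n =
     (if n = 0 then 0
      else \<sigma> * (comp C y (n - 1) ^ d - comp C y n ^ d)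
           - real n * (comp C y n - comp C y (n + 1)))"

definition is_solution :: "nat \<Rightarrow> nat \<Rightarrow> real \<Rightarrow> (nat \<Rightarrow> real) \<Rightarrow> (real \<Rightarrow> nat \<Rightarrow> real) \<Rightarrow> bool" where
  "is_solution C d \<sigma> u X \<longleftrightarrow>
     (\<forall>n\<le>C. X 0 n = u n) \<and>
     (\<forall>n\<le>C. \<forall>t\<ge>0. ((\<lambda>s. X s n) has_real_derivative drift C d \<sigma> (X t) n) (at t within {0..}))"

definition is_fixed_point :: "nat \<Rightarrow> nat \<Rightarrow> real \<Rightarrow> (nat \<Rightarrow> real) \<Rightarrow> bool" where
  "is_fixed_point C d \<sigma> p \<longleftrightarrow> inU C p \<and>
     (\<forall>n. 1 \<le> n \<and> n \<le> C \<longrightarrow>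
        \<sigma> * (comp C p (n - 1) ^ d - comp C p n ^ d) = real n * (comp C p n - comp C p (n + 1)))"

definition dist2 :: "nat \<Rightarrow> (nat \<Rightarrow> real) \<Rightarrow> (nat \<Rightarrow> real) \<Rightarrow> real" where
  "dist2 C a b = sqrt (\<Sum>n\<le>C. (a n - b n)^2)"

end

theory Submission
  imports Defs
begin

text \<open>
  The zeroth coordinate is constant, and a Gronwall estimate for the squared negative parts shows
  that the solution stays nonnegative. Put \<open>v\<^sub>n = x\<^sub>n - \<pi>\<^sub>n\<close>. Subtracting the fixed point
  equations, the drift of \<open>v\<^sub>n\<close> is \<open>\<sigma>(a\<^sub>n\<^sub>-\<^sub>1 v\<^sub>n\<^sub>-\<^sub>1 - a\<^sub>n v\<^sub>n) - n(v\<^sub>n - v\<^sub>n\<^sub>+\<^sub>1)\<close> with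
  \<open>a\<^sub>n \<ge> 0\<close> the difference quotient of \<open>y \<mapsto> y\<^sup>d\<close> between \<open>\<pi>\<^sub>n\<close> and \<open>x\<^sub>n\<close>. Multiplying by
  \<open>sign v\<^sub>n\<close> and summing over \<open>1 \<le> n \<le> C\<close>, the \<open>\<sigma>\<close>-terms telescope to something nonpositive
  and the \<open>n\<close>-terms telescope to \<open>-\<Sum>|v\<^sub>n|\<close>, so the \<open>\<ell>\<^sup>1\<close> distance to \<open>\<pi>\<close> decays like
  \<open>e\<^sup>-\<^sup>t\<close>. Since \<open>|v\<^sub>n|\<close> is not differentiable, the argument is run for \<open>\<surd>(v\<^sub>n\<^sup>2 + \<epsilon>\<^sup>2)\<close> and
  \<open>\<epsilon> \<rightarrow> 0\<close>. Comparing \<open>\<ell>\<^sup>1\<close> and \<open>\<ell>\<^sup>2\<close> norms gives \<open>\<delta>\<^sub>1 = 1\<close> and \<open>D\<^sub>3 = \<surd>(C+1)\<close>.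
\<close>

lemma deriv_nonpos_imp_le_at_0:
  fixes F F' :: "real \<Rightarrow> real"
  assumes der: "\<And>s. s \<ge> 0 \<Longrightarrow> (F has_real_derivative F' s) (at s within {0..})"
    and nonpos: "\<And>s. 0 \<le> s \<Longrightarrow> s \<le> T \<Longrightarrow> F' s \<le> 0" and T: "T \<ge> 0"
  shows "F T \<le> F 0"
proof (rule DERIV_nonpos_imp_decreasing_open[OF T])
  fix x assume x: "0 < x" "x < T"
  then have "at x within {0..} = at x" by (intro at_within_interior) simp
  then show "\<exists>y. DERIV F x :> y \<and> y \<le> 0" using der[of x] nonpos[of x] x by auto
next
  have "continuous_on {0..} F"
    unfolding continuous_on_eq_continuous_within using der DERIV_continuous by blast
  then show "continuous_on {0..T} F" by (rule continuous_on_subset) auto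
qed

lemma gronwall_from_0:
  fixes F F' :: "real \<Rightarrow> real"
  assumes der: "\<And>s. s \<ge> 0 \<Longrightarrow> (F has_real_derivative F' s) (at s within {0..})"
    and bound: "\<And>s. 0 \<le> s \<Longrightarrow> s \<le> T \<Longrightarrow> F' s \<le> L * (F s - K)" and T: "T \<ge> 0"
  shows "F T - K \<le> exp (L * T) * (F 0 - K)"
proof -
  define G where "G s = exp (- L * s) * (F s - K)" for s
  have "G T \<le> G 0"
  proof (rule deriv_nonpos_imp_le_at_0[OF _ _ T])
    show "(G has_real_derivative exp (- L * s) * (F' s - L * (F s - K))) (at s within {0..})"
      if "s \<ge> 0" for s
      unfolding G_def using der[OF that] by (auto intro!: derivative_eq_intros simp: algebra_simps)
    show "exp (- L * s) * (F' s - L * (F s - K)) \<le> 0" if "0 \<le> s" "s \<le> T" for s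
      using bound[OF that] by (simp add: mult_nonneg_nonpos)
  qed
  then show ?thesis by (simp add: G_def exp_minus field_simps)
qed

lemma DERIV_min_0_squared: "((\<lambda>y::real. (min y 0)\<^sup>2) has_real_derivative 2 * min x 0) (at x)"
proof -
  consider "x < 0" | "x > 0" | "x = 0" by linarith
  then show ?thesis
  proof cases
    case 1
    have "((\<lambda>y::real. y\<^sup>2) has_real_derivative 2 * min x 0) (at x)"
      using 1 by (auto intro!: derivative_eq_intros)
    then show ?thesis
      by (rule has_field_derivative_transform_within_open[where S="{..<0}"]) (use 1 in auto)
  next
    case 2
    have "((\<lambda>y::real. 0) has_real_derivative 2 * min x 0) (at x)"
      using 2 by (auto intro!: derivative_eq_intros)
    then show ?thesis
      by (rule has_field_derivative_transform_within_open[where S="{0<..}"]) (use 2 in auto)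
  next
    case 3
    have "((\<lambda>y::real. (min y 0)\<^sup>2 / y) \<longlongrightarrow> 0) (at 0)"
    proof (rule Lim_null_comparison[where g="\<lambda>y. \<bar>y\<bar>"])
      have "norm ((min y 0)\<^sup>2 / y) \<le> \<bar>y\<bar>" for y :: real
        by (cases "y = 0") (simp_all add: abs_divide divide_le_eq power2_eq_square min_def)
      then show "\<forall>\<^sub>F y in at 0. norm ((min y 0)\<^sup>2 / y) \<le> \<bar>y::real\<bar>" by simp
      show "((\<lambda>y::real. \<bar>y\<bar>) \<longlongrightarrow> 0) (at 0)"
        using tendsto_rabs[OF tendsto_ident_at, of "0::real" UNIV] by simp
    qed
    then show ?thesis using 3 by (simp add: has_field_derivative_iff)
  qed
qed

lemma DERIV_sqrt_square_add_square:
  fixes \<epsilon> :: real assumes "\<epsilon> > 0"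
  shows "((\<lambda>y. sqrt (y\<^sup>2 + \<epsilon>\<^sup>2)) has_real_derivative y / sqrt (y\<^sup>2 + \<epsilon>\<^sup>2)) (at y)"
proof -
  have "y\<^sup>2 + \<epsilon>\<^sup>2 > 0" using assms by (simp add: add_nonneg_pos)
  then show ?thesis by (auto intro!: derivative_eq_intros simp: field_simps)
qed

lemma abs_le_sqrt_square_add_square: "\<bar>x\<bar> \<le> sqrt (x\<^sup>2 + \<epsilon>\<^sup>2)"
  by (metis real_sqrt_abs real_sqrt_le_mono le_add_same_cancel1 zero_le_power2)

lemma sqrt_square_add_square_le:
  fixes \<epsilon> :: real assumes "\<epsilon> \<ge> 0"
  shows "sqrt (x\<^sup>2 + \<epsilon>\<^sup>2) \<le> \<bar>x\<bar> + \<epsilon>"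
proof -
  have "x\<^sup>2 + \<epsilon>\<^sup>2 \<le> (\<bar>x\<bar> + \<epsilon>)\<^sup>2" using assms by (simp add: power2_eq_square algebra_simps)
  then show ?thesis using assms real_sqrt_le_mono by fastforce
qed

lemma abs_power_le_mult:
  fixes a B :: real
  assumes "\<bar>a\<bar> \<le> B" "d \<ge> 1"
  shows "\<bar>a ^ d\<bar> \<le> B ^ (d - 1) * \<bar>a\<bar>"
proof -
  have "a ^ d = a * a ^ (d - 1)" using assms(2) by (cases d) auto
  moreover have "\<bar>a\<bar> ^ (d - 1) \<le> B ^ (d - 1)" by (rule power_mono) (use assms in auto)
  ultimately show ?thesis by (simp add: abs_mult power_abs mult.commute mult_left_mono)
qed

lemma abs_mult_le_of_squares_le:
  fixes x y P :: real
  assumes "x\<^sup>2 \<le> P" "y\<^sup>2 \<le> P"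
  shows "\<bar>x\<bar> * \<bar>y\<bar> \<le> P"
proof -
  have "0 \<le> (\<bar>x\<bar> - \<bar>y\<bar>)\<^sup>2" by simp
  also have "\<dots> = x\<^sup>2 + y\<^sup>2 - 2 * (\<bar>x\<bar> * \<bar>y\<bar>)" by (simp add: power2_eq_square algebra_simps)
  finally show ?thesis using assms by linarith
qed

lemma min_0_mult_power_le:
  fixes a b B :: real
  assumes "\<bar>a\<bar> \<le> B" "d \<ge> 1"
  shows "min b 0 * a ^ d \<le> B ^ (d - 1) * (\<bar>min b 0\<bar> * \<bar>min a 0\<bar>)"
proof (cases "a \<ge> 0")
  case True
  then have "min b 0 * a ^ d \<le> 0" by (simp add: mult_nonpos_nonneg)
  also have "0 \<le> B ^ (d - 1) * (\<bar>min b 0\<bar> * \<bar>min a 0\<bar>)"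
    using assms(1) by (intro mult_nonneg_nonneg) auto
  finally show ?thesis .
next
  case False
  have "min b 0 * a ^ d \<le> \<bar>min b 0\<bar> * \<bar>a ^ d\<bar>" by (metis abs_ge_self abs_mult)
  also have "\<dots> \<le> \<bar>min b 0\<bar> * (B ^ (d - 1) * \<bar>a\<bar>)"
    by (rule mult_left_mono[OF abs_power_le_mult[OF assms]]) simp
  finally show ?thesis using False by (simp add: mult_ac)
qed

lemma neg_min_0_mult_power_le:
  fixes b B :: real
  assumes "\<bar>b\<bar> \<le> B" "d \<ge> 1"
  shows "- (min b 0 * b ^ d) \<le> B ^ (d - 1) * (min b 0)\<^sup>2"
proof (cases "b \<ge> 0")
  case True
  then show ?thesis using assms(1) by simp
next
  case False
  then have "- (min b 0 * b ^ d) \<le> \<bar>b\<bar> * \<bar>b ^ d\<bar>" by (simp add: min_def abs_mult[symmetric])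
  also have "\<dots> \<le> \<bar>b\<bar> * (B ^ (d - 1) * \<bar>b\<bar>)"
    by (rule mult_left_mono[OF abs_power_le_mult[OF assms]]) simp
  finally show ?thesis using False by (simp add: min_def power2_eq_square algebra_simps)
qed

text \<open>
  The contribution of one coordinate to the derivative of \<open>\<Sum>n. (min x\<^sub>n 0)\<^sup>2\<close>: here \<open>a, b, c\<close>
  stand for \<open>x\<^sub>n\<^sub>-\<^sub>1, x\<^sub>n, x\<^sub>n\<^sub>+\<^sub>1\<close> and \<open>P\<close> for the sum of squared negative parts.
\<close>
lemma min_0_mult_drift_le:
  fixes a b c B \<sigma> m P :: real
  assumes ab: "\<bar>a\<bar> \<le> B" and bb: "\<bar>b\<bar> \<le> B" and d: "d \<ge> 1" and \<sigma>: "\<sigma> > 0" and m: "m \<ge> 0"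
    and Pa: "(min a 0)\<^sup>2 \<le> P" and Pb: "(min b 0)\<^sup>2 \<le> P" and Pc: "(min c 0)\<^sup>2 \<le> P"
  shows "2 * min b 0 * (\<sigma> * (a ^ d - b ^ d) - m * (b - c)) \<le> 2 * (2 * \<sigma> * B ^ (d - 1) + m) * P"
proof -
  have Bd: "B ^ (d - 1) \<ge> 0" using ab by simp
  have i1: "min b 0 * a ^ d \<le> B ^ (d - 1) * P"
  proof -
    have "min b 0 * a ^ d \<le> B ^ (d - 1) * (\<bar>min b 0\<bar> * \<bar>min a 0\<bar>)"
      by (rule min_0_mult_power_le[OF ab d])
    also have "\<dots> \<le> B ^ (d - 1) * P"
      by (rule mult_left_mono[OF abs_mult_le_of_squares_le[OF Pb Pa] Bd])
    finally show ?thesis .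
  qed
  have i2: "- (min b 0 * b ^ d) \<le> B ^ (d - 1) * P"
    using neg_min_0_mult_power_le[OF bb d] mult_left_mono[OF Pb Bd] by linarith
  have i3: "- (min b 0 * b) \<le> 0" by (simp add: min_def mult_le_0_iff)
  have i4: "min b 0 * c \<le> P"
  proof -
    have "min b 0 * c \<le> \<bar>min b 0\<bar> * \<bar>min c 0\<bar>"
      by (cases "c \<ge> 0") (auto simp: min_def mult_le_0_iff abs_mult[symmetric])
    then show ?thesis using abs_mult_le_of_squares_le[OF Pb Pc] by linarith
  qed
  have "2 * min b 0 * (\<sigma> * (a ^ d - b ^ d) - m * (b - c))
      = 2 * \<sigma> * (min b 0 * a ^ d) + 2 * \<sigma> * (- (min b 0 * b ^ d))
        + 2 * m * (- (min b 0 * b)) + 2 * m * (min b 0 * c)"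
    by (simp add: algebra_simps)
  also have "\<dots> \<le> 2 * \<sigma> * (B ^ (d - 1) * P) + 2 * \<sigma> * (B ^ (d - 1) * P) + 2 * m * 0 + 2 * m * P"
    using i1 i2 i3 i4 \<sigma> m by (intro add_mono mult_left_mono) auto
  also have "\<dots> = 2 * (2 * \<sigma> * B ^ (d - 1) + m) * P" by (simp add: algebra_simps)
  finally show ?thesis .
qed

lemma smoothed_sign_mult_le:
  fixes v w \<epsilon> :: real assumes "\<epsilon> > 0"
  shows "v / sqrt (v\<^sup>2 + \<epsilon>\<^sup>2) * w \<le> \<bar>w\<bar>"
proof -
  have "\<bar>v\<bar> \<le> sqrt (v\<^sup>2 + \<epsilon>\<^sup>2)" "sqrt (v\<^sup>2 + \<epsilon>\<^sup>2) > 0"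
    using assms abs_le_sqrt_square_add_square by (auto simp: add_nonneg_pos)
  then have "\<bar>v / sqrt (v\<^sup>2 + \<epsilon>\<^sup>2)\<bar> * \<bar>w\<bar> \<le> \<bar>w\<bar>"
    by (intro mult_left_le_one_le) (auto simp: abs_divide divide_le_eq)
  then show ?thesis by (metis abs_ge_self abs_mult order_trans)
qed

lemma abs_minus_le_smoothed_sign_mult:
  fixes v \<epsilon> :: real assumes \<epsilon>: "\<epsilon> > 0"
  shows "\<bar>v\<bar> - \<epsilon> \<le> v / sqrt (v\<^sup>2 + \<epsilon>\<^sup>2) * v"
proof -
  define r where "r = sqrt (v\<^sup>2 + \<epsilon>\<^sup>2)"
  have r_pos: "r > 0" unfolding r_def using \<epsilon> by (simp add: add_nonneg_pos)
  have "(\<bar>v\<bar> - \<epsilon>) * r \<le> v\<^sup>2"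
  proof (cases "\<bar>v\<bar> \<ge> \<epsilon>")
    case True
    have "r \<le> \<bar>v\<bar> + \<epsilon>" unfolding r_def using \<epsilon> by (intro sqrt_square_add_square_le) simp
    then have "(\<bar>v\<bar> - \<epsilon>) * r \<le> (\<bar>v\<bar> - \<epsilon>) * (\<bar>v\<bar> + \<epsilon>)" using True by (intro mult_left_mono) auto
    also have "\<dots> \<le> v\<^sup>2" by (simp add: power2_eq_square algebra_simps)
    finally show ?thesis .
  next
    case False
    then have "(\<bar>v\<bar> - \<epsilon>) * r \<le> 0" using r_pos by (intro mult_nonpos_nonneg) auto
    then show ?thesis by (meson order_trans zero_le_power2)
  qed
  then show ?thesis using r_pos unfolding r_def[symmetric] by (simp add: le_divide_eq power2_eq_square)
qed

text \<open>
  Up to an \<open>O(\<epsilon>)\<close> error, the smoothed sign \<open>v\<^sub>1 / \<surd>(v\<^sub>1\<^sup>2 + \<epsilon>\<^sup>2)\<close> turns the drift of \<open>v\<^sub>1\<close>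
  into a bound for the drift of \<open>|v\<^sub>1|\<close>.
\<close>
lemma smoothed_sign_mult_drift_le:
  fixes v0 v1 v2 a0 a1 A \<sigma> m \<epsilon> :: real
  assumes a0: "a0 \<ge> 0" and a1: "a1 \<ge> 0" "a1 \<le> A" and \<sigma>: "\<sigma> > 0" and m: "m \<ge> 0" and \<epsilon>: "\<epsilon> > 0"
  shows "v1 / sqrt (v1\<^sup>2 + \<epsilon>\<^sup>2) * (\<sigma> * (a0 * v0 - a1 * v1) - m * (v1 - v2))
         \<le> \<sigma> * a0 * \<bar>v0\<bar> - \<sigma> * a1 * \<bar>v1\<bar> + m * \<bar>v2\<bar> - m * \<bar>v1\<bar> + \<epsilon> * (\<sigma> * A + m)"
proof -
  define sg where "sg = v1 / sqrt (v1\<^sup>2 + \<epsilon>\<^sup>2)"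
  have sg_v1: "\<bar>v1\<bar> - \<epsilon> \<le> sg * v1"
    unfolding sg_def by (rule abs_minus_le_smoothed_sign_mult[OF \<epsilon>])
  have t0: "\<sigma> * a0 * (sg * v0) \<le> \<sigma> * a0 * \<bar>v0\<bar>"
    using \<sigma> a0 smoothed_sign_mult_le[OF \<epsilon>, of v1 v0] by (intro mult_left_mono) (auto simp: sg_def)
  have t1: "\<sigma> * a1 * (\<bar>v1\<bar> - \<epsilon>) \<le> \<sigma> * a1 * (sg * v1)"
    using \<sigma> a1 sg_v1 by (intro mult_left_mono) auto
  have t1': "\<sigma> * a1 * \<epsilon> \<le> \<sigma> * A * \<epsilon>"
    using \<sigma> a1 \<epsilon> by (intro mult_right_mono mult_left_mono) auto
  have t2: "m * (\<bar>v1\<bar> - \<epsilon>) \<le> m * (sg * v1)"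
    using m sg_v1 by (intro mult_left_mono) auto
  have t3: "m * (sg * v2) \<le> m * \<bar>v2\<bar>"
    using m smoothed_sign_mult_le[OF \<epsilon>, of v1 v2] by (intro mult_left_mono) (auto simp: sg_def)
  have "sg * (\<sigma> * (a0 * v0 - a1 * v1) - m * (v1 - v2))
      = \<sigma> * a0 * (sg * v0) - \<sigma> * a1 * (sg * v1) - m * (sg * v1) + m * (sg * v2)"
    by (simp add: algebra_simps)
  also have "\<dots> \<le> \<sigma> * a0 * \<bar>v0\<bar> - \<sigma> * a1 * \<bar>v1\<bar> + m * \<bar>v2\<bar> - m * \<bar>v1\<bar> + \<epsilon> * (\<sigma> * A + m)"
    using t0 t1 t1' t2 t3 by (simp add: algebra_simps)
  finally show ?thesis by (simp only: sg_def)
qed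

lemma smoothed_l1_drift_sum_le:
  fixes v a :: "nat \<Rightarrow> real" and A \<sigma> \<epsilon> :: real
  assumes \<sigma>: "\<sigma> > 0" and \<epsilon>: "\<epsilon> > 0" and v0: "v 0 = 0" and vC: "v (Suc C) = 0"
    and a_nonneg: "\<And>k. 0 \<le> a k" and a_le: "\<And>k. a k \<le> A"
  shows "(\<Sum>n<C. v (Suc n) / sqrt ((v (Suc n))\<^sup>2 + \<epsilon>\<^sup>2) *
            (\<sigma> * (a n * v n - a (Suc n) * v (Suc n)) - real (Suc n) * (v (Suc n) - v (Suc (Suc n)))))
         \<le> - (\<Sum>n<C. \<bar>v (Suc n)\<bar>) + \<epsilon> * (real C * (\<sigma> * A + real C))"
proof -
  define f where "f k = \<sigma> * a k * \<bar>v k\<bar>" for k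
  define g where "g k = real k * \<bar>v (Suc k)\<bar>" for k
  have "(\<Sum>n<C. v (Suc n) / sqrt ((v (Suc n))\<^sup>2 + \<epsilon>\<^sup>2) *
            (\<sigma> * (a n * v n - a (Suc n) * v (Suc n)) - real (Suc n) * (v (Suc n) - v (Suc (Suc n)))))
      \<le> (\<Sum>n<C. (f n - f (Suc n)) + (g (Suc n) - g n) + (\<epsilon> * (\<sigma> * A + real (Suc n)) - \<bar>v (Suc n)\<bar>))"
  proof (rule sum_mono)
    fix n
    have "v (Suc n) / sqrt ((v (Suc n))\<^sup>2 + \<epsilon>\<^sup>2) *
            (\<sigma> * (a n * v n - a (Suc n) * v (Suc n)) - real (Suc n) * (v (Suc n) - v (Suc (Suc n))))
        \<le> \<sigma> * a n * \<bar>v n\<bar> - \<sigma> * a (Suc n) * \<bar>v (Suc n)\<bar> + real (Suc n) * \<bar>v (Suc (Suc n))\<bar>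
          - real (Suc n) * \<bar>v (Suc n)\<bar> + \<epsilon> * (\<sigma> * A + real (Suc n))"
      by (rule smoothed_sign_mult_drift_le[OF a_nonneg a_nonneg a_le \<sigma> _ \<epsilon>]) simp
    also have "\<dots> = (f n - f (Suc n)) + (g (Suc n) - g n) + (\<epsilon> * (\<sigma> * A + real (Suc n)) - \<bar>v (Suc n)\<bar>)"
      unfolding f_def g_def by (simp add: algebra_simps)
    finally show "v (Suc n) / sqrt ((v (Suc n))\<^sup>2 + \<epsilon>\<^sup>2) *
            (\<sigma> * (a n * v n - a (Suc n) * v (Suc n)) - real (Suc n) * (v (Suc n) - v (Suc (Suc n))))
        \<le> (f n - f (Suc n)) + (g (Suc n) - g n) + (\<epsilon> * (\<sigma> * A + real (Suc n)) - \<bar>v (Suc n)\<bar>)" .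
  qed
  also have "\<dots> = (f 0 - f C) + (g C - g 0) + (\<Sum>n<C. \<epsilon> * (\<sigma> * A + real (Suc n)) - \<bar>v (Suc n)\<bar>)"
    by (simp only: sum.distrib sum_lessThan_telescope sum_lessThan_telescope')
  also have "\<dots> \<le> (\<Sum>n<C. \<epsilon> * (\<sigma> * A + real C)) - (\<Sum>n<C. \<bar>v (Suc n)\<bar>)"
  proof -
    have "f 0 = 0" "g C = 0" "g 0 = 0" unfolding f_def g_def using v0 vC by simp_all
    moreover have "f C \<ge> 0" unfolding f_def using \<sigma> a_nonneg[of C] by simp
    moreover have "(\<Sum>n<C. \<epsilon> * (\<sigma> * A + real (Suc n))) \<le> (\<Sum>n<C. \<epsilon> * (\<sigma> * A + real C))"
      using \<epsilon> by (intro sum_mono mult_left_mono) auto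
    ultimately show ?thesis by (simp add: sum_subtractf)
  qed
  finally show ?thesis by (simp add: mult_ac)
qed

lemma power_diff_quotient_bounds:
  fixes p x B :: real
  assumes p: "0 \<le> p" "p \<le> B" and x: "0 \<le> x" "x \<le> B"
  shows "0 \<le> (\<Sum>i<d. p ^ (d - Suc i) * x ^ i)"
    and "(\<Sum>i<d. p ^ (d - Suc i) * x ^ i) \<le> real d * B ^ (d - 1)"
proof -
  show "0 \<le> (\<Sum>i<d. p ^ (d - Suc i) * x ^ i)" using p x by (intro sum_nonneg) simp
  have "(\<Sum>i<d. p ^ (d - Suc i) * x ^ i) \<le> of_nat (card {..<d}) * B ^ (d - 1)"
  proof (rule sum_bounded_above)
    fix i assume i: "i \<in> {..<d}"
    have "p ^ (d - Suc i) * x ^ i \<le> B ^ (d - Suc i) * B ^ i"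
      using p x by (intro mult_mono power_mono) auto
    also have "\<dots> = B ^ (d - 1)" using i by (simp add: power_add[symmetric])
    finally show "p ^ (d - Suc i) * x ^ i \<le> B ^ (d - 1)" .
  qed
  then show "(\<Sum>i<d. p ^ (d - Suc i) * x ^ i) \<le> real d * B ^ (d - 1)" by simp
qed

lemma inU_antimono: "inU C w \<Longrightarrow> m \<le> n \<Longrightarrow> n \<le> C \<Longrightarrow> w n \<le> w m"
proof (induction n)
  case (Suc n)
  show ?case
  proof (cases "m = Suc n")
    case False
    then have "w n \<le> w m" using Suc by simp
    moreover have "w (Suc n) \<le> w n" using Suc.prems unfolding inU_def by auto
    ultimately show ?thesis by simp
  qed simp
qed simp

lemma inU_bounds: "inU C w \<Longrightarrow> n \<le> C \<Longrightarrow> 0 \<le> w n \<and> w n \<le> 1"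
  using inU_antimono[of C w n C] inU_antimono[of C w 0 n] unfolding inU_def by auto

lemma drift_minus_fixed_point:
  fixes y :: "nat \<Rightarrow> real"
  assumes fp: "is_fixed_point C d \<sigma> \<pi>" and n: "n < C"
  defines "v \<equiv> \<lambda>k. comp C y k - comp C \<pi> k"
    and "a \<equiv> \<lambda>k. \<Sum>i<d. comp C \<pi> k ^ (d - Suc i) * comp C y k ^ i"
  shows "drift C d \<sigma> y (Suc n)
           = \<sigma> * (a n * v n - a (Suc n) * v (Suc n)) - real (Suc n) * (v (Suc n) - v (Suc (Suc n)))"
proof -
  have pow_diff: "comp C y k ^ d - comp C \<pi> k ^ d = a k * v k" for k
    unfolding a_def v_def by (simp add: power_diff_sumr2 mult.commute)
  have "\<sigma> * (comp C \<pi> n ^ d - comp C \<pi> (Suc n) ^ d)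
      = real (Suc n) * (comp C \<pi> (Suc n) - comp C \<pi> (Suc (Suc n)))"
    using fp n unfolding is_fixed_point_def by (metis Suc_leI diff_Suc_1 le_add1 plus_1_eq_Suc add.commute)
  then have "drift C d \<sigma> y (Suc n)
      = \<sigma> * ((comp C y n ^ d - comp C \<pi> n ^ d) - (comp C y (Suc n) ^ d - comp C \<pi> (Suc n) ^ d))
        - real (Suc n) * (v (Suc n) - v (Suc (Suc n)))"
    unfolding drift_def v_def by (simp add: algebra_simps)
  then show ?thesis by (simp only: pow_diff)
qed

lemma smoothed_l1_gronwall:
  fixes w D :: "real \<Rightarrow> nat \<Rightarrow> real" and \<epsilon> c T :: real
  assumes \<epsilon>: "\<epsilon> > 0" and c: "c \<ge> 0" and T: "T \<ge> 0"
    and der: "\<And>n s. n < N \<Longrightarrow> s \<ge> 0 \<Longrightarrow> ((\<lambda>s. w s n) has_real_derivative D s n) (at s within {0..})"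
    and bound: "\<And>s. 0 \<le> s \<Longrightarrow> s \<le> T \<Longrightarrow>
      (\<Sum>n<N. w s n / sqrt ((w s n)\<^sup>2 + \<epsilon>\<^sup>2) * D s n) \<le> - (\<Sum>n<N. \<bar>w s n\<bar>) + \<epsilon> * c"
  shows "(\<Sum>n<N. \<bar>w T n\<bar>) \<le> exp (- T) * (\<Sum>n<N. \<bar>w 0 n\<bar>) + \<epsilon> * (2 * real N + c)"
proof -
  define S where "S s = (\<Sum>n<N. \<bar>w s n\<bar>)" for s
  define V where "V s = (\<Sum>n<N. sqrt ((w s n)\<^sup>2 + \<epsilon>\<^sup>2))" for s
  define K where "K = \<epsilon> * (real N + c)"
  have S_le_V: "S s \<le> V s" for s
    unfolding S_def V_def by (intro sum_mono abs_le_sqrt_square_add_square)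
  have V_le_S: "V s \<le> S s + \<epsilon> * real N" for s
  proof -
    have "V s \<le> (\<Sum>n<N. \<bar>w s n\<bar> + \<epsilon>)"
      unfolding V_def using \<epsilon> by (intro sum_mono sqrt_square_add_square_le) simp
    then show ?thesis by (simp add: S_def sum.distrib mult.commute)
  qed
  have decay: "V T - K \<le> exp (- 1 * T) * (V 0 - K)"
  proof (rule gronwall_from_0[OF _ _ T])
    show "(V has_real_derivative (\<Sum>n<N. w s n / sqrt ((w s n)\<^sup>2 + \<epsilon>\<^sup>2) * D s n)) (at s within {0..})"
      if "s \<ge> 0" for s
      unfolding V_def
      by (intro DERIV_sum DERIV_chain2[OF DERIV_sqrt_square_add_square[OF \<epsilon>]] der) (use that in auto)
    show "(\<Sum>n<N. w s n / sqrt ((w s n)\<^sup>2 + \<epsilon>\<^sup>2) * D s n) \<le> - 1 * (V s - K)"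
      if "0 \<le> s" "s \<le> T" for s
      using bound[OF that] V_le_S[of s] unfolding S_def K_def by (simp add: algebra_simps)
  qed
  have "V 0 - K \<le> S 0 + \<epsilon> * real N"
  proof -
    have "K \<ge> 0" unfolding K_def using \<epsilon> c by simp
    then show ?thesis using V_le_S[of 0] by linarith
  qed
  then have "exp (- T) * (V 0 - K) \<le> exp (- T) * (S 0 + \<epsilon> * real N)"
    by (rule mult_left_mono) simp
  moreover have "V T - K \<le> exp (- T) * (V 0 - K)" using decay by simp
  ultimately have "V T \<le> K + exp (- T) * (S 0 + \<epsilon> * real N)" by linarith
  also have "\<dots> \<le> K + exp (- T) * S 0 + \<epsilon> * real N"
    using T \<epsilon> by (simp add: distrib_left mult_left_le_one_le)
  finally show ?thesis
    using S_le_V[of T] unfolding S_def K_def by (simp add: algebra_simps)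
qed

lemma min_0_comp_squared_le_sum:
  "(min (comp C y k) 0)\<^sup>2 \<le> (\<Sum>n\<le>C. (min (y n) 0)\<^sup>2)"
proof (cases "k \<le> C")
  case True
  then show ?thesis unfolding comp_def by (simp, intro member_le_sum) auto
qed (simp add: comp_def sum_nonneg)

lemma min_0_mult_drift_le_sum:
  fixes y :: "nat \<Rightarrow> real"
  assumes B: "\<And>k. \<bar>comp C y k\<bar> \<le> B" and d: "d \<ge> 1" and \<sigma>: "\<sigma> > 0" and n: "n \<le> C"
  shows "2 * min (y n) 0 * drift C d \<sigma> y n
           \<le> 2 * (2 * \<sigma> * B ^ (d - 1) + real C) * (\<Sum>k\<le>C. (min (y k) 0)\<^sup>2)"
proof -
  have B_nonneg: "B \<ge> 0" using B[of 0] by linarith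
  have P_nonneg: "(\<Sum>k\<le>C. (min (y k) 0)\<^sup>2) \<ge> 0" by (simp add: sum_nonneg)
  show ?thesis
  proof (cases n)
    case 0
    then show ?thesis using \<sigma> B_nonneg P_nonneg by (simp add: drift_def)
  next
    case (Suc m)
    have "2 * min (y n) 0 * drift C d \<sigma> y n
        = 2 * min (comp C y n) 0 * (\<sigma> * (comp C y m ^ d - comp C y n ^ d)
             - real n * (comp C y n - comp C y (Suc n)))"
      using Suc n by (simp add: drift_def comp_def)
    also have "\<dots> \<le> 2 * (2 * \<sigma> * B ^ (d - 1) + real n) * (\<Sum>k\<le>C. (min (y k) 0)\<^sup>2)"
      by (rule min_0_mult_drift_le[OF B B d \<sigma>]) (auto simp: min_0_comp_squared_le_sum)
    also have "\<dots> \<le> 2 * (2 * \<sigma> * B ^ (d - 1) + real C) * (\<Sum>k\<le>C. (min (y k) 0)\<^sup>2)"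
      using n P_nonneg by (intro mult_right_mono) auto
    finally show ?thesis .
  qed
qed

lemma dist2_le_sum_abs: "dist2 C a b \<le> (\<Sum>n\<le>C. \<bar>a n - b n\<bar>)"
  unfolding dist2_def using L2_set_le_sum_abs[of "\<lambda>n. a n - b n" "{..C}"] by (simp add: L2_set_def)

lemma sum_abs_le_dist2: "(\<Sum>n\<le>C. \<bar>a n - b n\<bar>) \<le> sqrt (real (Suc C)) * dist2 C a b"
proof -
  have "(\<Sum>n\<le>C. \<bar>a n - b n\<bar>) = (\<Sum>n\<le>C. \<bar>a n - b n\<bar> * \<bar>1::real\<bar>)" by simp
  also have "\<dots> \<le> L2_set (\<lambda>n. a n - b n) {..C} * L2_set (\<lambda>n. 1) {..C}"
    by (rule L2_set_mult_ineq)
  finally show ?thesis by (simp add: L2_set_constant dist2_def L2_set_def mult.commute)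
qed

locale solution_in_U =
  fixes C d :: nat and \<sigma> :: real and u :: "nat \<Rightarrow> real" and X :: "real \<Rightarrow> nat \<Rightarrow> real"
  assumes d_pos: "d \<ge> 1" and \<sigma>_pos: "\<sigma> > 0" and u_in_U: "inU C u"
    and solution: "is_solution C d \<sigma> u X"
begin

lemma has_derivative_component:
  "n \<le> C \<Longrightarrow> s \<ge> 0 \<Longrightarrow> ((\<lambda>s. X s n) has_real_derivative drift C d \<sigma> (X s) n) (at s within {0..})"
  using solution unfolding is_solution_def by blast

lemma initial_component: "n \<le> C \<Longrightarrow> X 0 n = u n"
  using solution unfolding is_solution_def by blast

lemma component_0: assumes "s \<ge> 0" shows "X s 0 = 1"
proof -
  have "((\<lambda>s. X s 0) has_real_derivative 0) (at s within {0..})" if "s \<in> {0..}" for s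
    using has_derivative_component[of 0 s] that by (simp add: drift_def)
  then obtain c where "\<forall>s\<in>{0..}. X s 0 = c"
    using has_field_derivative_zero_constant[of "{0::real..}"] by blast
  then show ?thesis using assms initial_component[of 0] u_in_U unfolding inU_def by auto
qed

lemma bounded_on_interval: assumes "T \<ge> 0" shows "\<exists>B\<ge>1. \<forall>s\<in>{0..T}. \<forall>k. \<bar>comp C (X s) k\<bar> \<le> B"
proof -
  define g where "g s = (\<Sum>n\<le>C. \<bar>X s n\<bar>)" for s
  have "continuous_on {0..T} (\<lambda>s. X s n)" if "n \<le> C" for n
  proof -
    have "continuous_on {0..} (\<lambda>s. X s n)"
      unfolding continuous_on_eq_continuous_within
      using has_derivative_component[OF that] DERIV_continuous by blast
    then show ?thesis by (rule continuous_on_subset) auto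
  qed
  then have "continuous_on {0..T} g" unfolding g_def by (intro continuous_intros) auto
  then obtain s0 where s0: "\<forall>s\<in>{0..T}. g s \<le> g s0"
    using continuous_attains_sup[of "{0..T}" g] assms by auto
  have "\<bar>comp C (X s) k\<bar> \<le> max 1 (g s0)" if "s \<in> {0..T}" for s k
  proof (cases "k \<le> C")
    case True
    then have "\<bar>X s k\<bar> \<le> g s" unfolding g_def by (intro member_le_sum) auto
    then show ?thesis using s0 that True by (fastforce simp: comp_def)
  qed (simp add: comp_def)
  then show ?thesis by (intro exI[of _ "max 1 (g s0)"]) auto
qed

lemma comp_nonneg: assumes T: "T \<ge> 0" shows "0 \<le> comp C (X T) k"
proof -
  obtain B where B: "\<And>s k. s \<in> {0..T} \<Longrightarrow> \<bar>comp C (X s) k\<bar> \<le> B"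
    using bounded_on_interval[OF T] by blast
  define \<Phi> where "\<Phi> s = (\<Sum>n\<le>C. (min (X s n) 0)\<^sup>2)" for s
  define K where "K = 2 * (2 * \<sigma> * B ^ (d - 1) + real C)"
  have coordinate_le: "2 * min (X s n) 0 * drift C d \<sigma> (X s) n \<le> K * \<Phi> s"
    if "s \<in> {0..T}" and "n \<le> C" for s n
    unfolding K_def \<Phi>_def using B[OF that(1)] d_pos \<sigma>_pos that(2) by (rule min_0_mult_drift_le_sum)
  have "\<Phi> T - 0 \<le> exp (real (Suc C) * K * T) * (\<Phi> 0 - 0)"
  proof (rule gronwall_from_0[OF _ _ T])
    show "(\<Phi> has_real_derivative (\<Sum>n\<le>C. 2 * min (X s n) 0 * drift C d \<sigma> (X s) n)) (at s within {0..})"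
      if "s \<ge> 0" for s
      unfolding \<Phi>_def
      by (intro DERIV_sum DERIV_chain2[OF DERIV_min_0_squared] has_derivative_component)
        (use that in auto)
    show "(\<Sum>n\<le>C. 2 * min (X s n) 0 * drift C d \<sigma> (X s) n) \<le> real (Suc C) * K * (\<Phi> s - 0)"
      if "0 \<le> s" "s \<le> T" for s
    proof -
      have "(\<Sum>n\<le>C. 2 * min (X s n) 0 * drift C d \<sigma> (X s) n) \<le> (\<Sum>n\<le>C. K * \<Phi> s)"
        using coordinate_le that by (intro sum_mono) auto
      then show ?thesis by (simp add: mult.assoc)
    qed
  qed
  moreover have "\<Phi> 0 = 0"
    unfolding \<Phi>_def using initial_component inU_bounds[OF u_in_U] by (intro sum.neutral) auto
  ultimately have "\<Phi> T \<le> 0" by simp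
  then have "(min (comp C (X T) k) 0)\<^sup>2 \<le> 0"
    using min_0_comp_squared_le_sum[of C "X T" k] unfolding \<Phi>_def by linarith
  then show ?thesis by (simp add: min_def split: if_splits)
qed

lemma l1_decay_above_0:
  assumes fp: "is_fixed_point C d \<sigma> \<pi>" and T: "T \<ge> 0"
  shows "(\<Sum>n<C. \<bar>X T (Suc n) - \<pi> (Suc n)\<bar>) \<le> exp (- T) * (\<Sum>n<C. \<bar>u (Suc n) - \<pi> (Suc n)\<bar>)"
proof -
  obtain B where B1: "B \<ge> 1" and B: "\<And>s k. s \<in> {0..T} \<Longrightarrow> \<bar>comp C (X s) k\<bar> \<le> B"
    using bounded_on_interval[OF T] by blast
  define A where "A = real d * B ^ (d - 1)"
  define v where "v s k = comp C (X s) k - comp C \<pi> k" for s k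
  define a where "a s k = (\<Sum>i<d. comp C \<pi> k ^ (d - Suc i) * comp C (X s) k ^ i)" for s k
  define c where "c = real C * (\<sigma> * A + real C)"
  have \<pi>_bounds: "0 \<le> comp C \<pi> k" "comp C \<pi> k \<le> B" for k
    using inU_bounds[of C \<pi> k] fp B1 unfolding is_fixed_point_def comp_def by auto
  have a_bounds: "0 \<le> a s k" "a s k \<le> A" if "s \<in> {0..T}" for s k
    unfolding a_def A_def using \<pi>_bounds comp_nonneg[of s] B[OF that, of k] that
    by (intro power_diff_quotient_bounds; auto)+
  have "(\<Sum>n<C. \<bar>v T (Suc n)\<bar>) \<le> exp (- T) * (\<Sum>n<C. \<bar>v 0 (Suc n)\<bar>)"
  proof (rule field_le_epsilon)
    fix e :: real assume e: "e > 0"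
    define \<epsilon> where "\<epsilon> = e / (2 * real C + c + 1)"
    have c_nonneg: "c \<ge> 0" unfolding c_def A_def using \<sigma>_pos B1 by simp
    then have \<epsilon>: "\<epsilon> > 0" and "\<epsilon> * (2 * real C + c) \<le> e"
      unfolding \<epsilon>_def using e by (auto simp: field_simps)
    moreover have "(\<Sum>n<C. \<bar>v T (Suc n)\<bar>) \<le> exp (- T) * (\<Sum>n<C. \<bar>v 0 (Suc n)\<bar>) + \<epsilon> * (2 * real C + c)"
    proof (rule smoothed_l1_gronwall[OF \<epsilon> c_nonneg T])
      show "((\<lambda>s. v s (Suc n)) has_real_derivative drift C d \<sigma> (X s) (Suc n)) (at s within {0..})"
        if "n < C" "s \<ge> 0" for n s
        using has_derivative_component[of "Suc n" s] that
        by (auto simp: v_def comp_def intro!: derivative_eq_intros)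
      show "(\<Sum>n<C. v s (Suc n) / sqrt ((v s (Suc n))\<^sup>2 + \<epsilon>\<^sup>2) * drift C d \<sigma> (X s) (Suc n))
          \<le> - (\<Sum>n<C. \<bar>v s (Suc n)\<bar>) + \<epsilon> * c" if "0 \<le> s" "s \<le> T" for s
      proof -
        have v0: "v s 0 = 0"
          using component_0[of s] fp that unfolding v_def comp_def is_fixed_point_def inU_def by simp
        have vC: "v s (Suc C) = 0" by (simp add: v_def comp_def)
        have "(\<Sum>n<C. v s (Suc n) / sqrt ((v s (Suc n))\<^sup>2 + \<epsilon>\<^sup>2) * drift C d \<sigma> (X s) (Suc n))
            = (\<Sum>n<C. v s (Suc n) / sqrt ((v s (Suc n))\<^sup>2 + \<epsilon>\<^sup>2) *
                (\<sigma> * (a s n * v s n - a s (Suc n) * v s (Suc n))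
                  - real (Suc n) * (v s (Suc n) - v s (Suc (Suc n)))))"
          using drift_minus_fixed_point[OF fp] by (intro sum.cong) (simp_all add: v_def a_def)
        also have "\<dots> \<le> - (\<Sum>n<C. \<bar>v s (Suc n)\<bar>) + \<epsilon> * c"
          unfolding c_def using a_bounds that
          by (intro smoothed_l1_drift_sum_le[OF \<sigma>_pos \<epsilon> v0 vC]) auto
        finally show ?thesis .
      qed
    qed
    ultimately show "(\<Sum>n<C. \<bar>v T (Suc n)\<bar>) \<le> exp (- T) * (\<Sum>n<C. \<bar>v 0 (Suc n)\<bar>) + e"
      by linarith
  qed
  then show ?thesis using initial_component by (simp add: v_def comp_def)
qed

lemma l1_contraction:
  assumes fp: "is_fixed_point C d \<sigma> \<pi>" and T: "T \<ge> 0"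
  shows "(\<Sum>n\<le>C. \<bar>X T n - \<pi> n\<bar>) \<le> exp (- T) * (\<Sum>n\<le>C. \<bar>u n - \<pi> n\<bar>)"
proof -
  have "X T 0 = \<pi> 0" "u 0 = \<pi> 0"
    using component_0[OF T] fp u_in_U unfolding is_fixed_point_def inU_def by auto
  then show ?thesis using l1_decay_above_0[OF fp T] by (simp add: sum.atMost_shift)
qed

end

theorem mainTheorem4:
  fixes C d :: nat and \<sigma> :: real and \<pi> :: "nat \<Rightarrow> real"
  assumes "C \<ge> 1" and "d \<ge> 1" and "\<sigma> > 0"
    and "is_fixed_point C d \<sigma> \<pi>"
  shows "\<exists>\<delta>1 D3. \<delta>1 > 0 \<and>
           (\<forall>u X. inU C u \<longrightarrow> is_solution C d \<sigma> u X \<longrightarrow>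
              (\<forall>t\<ge>0. dist2 C (X t) \<pi> \<le> D3 * exp (- \<delta>1 * t) * dist2 C u \<pi>))"
proof -
  have "dist2 C (X t) \<pi> \<le> sqrt (real (Suc C)) * exp (- t) * dist2 C u \<pi>"
    if "inU C u" "is_solution C d \<sigma> u X" "t \<ge> 0" for u X t
  proof -
    interpret solution_in_U C d \<sigma> u X using assms that by unfold_locales
    have "dist2 C (X t) \<pi> \<le> (\<Sum>n\<le>C. \<bar>X t n - \<pi> n\<bar>)" by (rule dist2_le_sum_abs)
    also have "\<dots> \<le> exp (- t) * (\<Sum>n\<le>C. \<bar>u n - \<pi> n\<bar>)" by (rule l1_contraction[OF assms(4) \<open>t \<ge> 0\<close>])
    also have "\<dots> \<le> exp (- t) * (sqrt (real (Suc C)) * dist2 C u \<pi>)"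
      by (intro mult_left_mono sum_abs_le_dist2) simp
    finally show ?thesis by (simp add: mult_ac)
  qed
  then show ?thesis by (intro exI[of _ 1] exI[of _ "sqrt (real (Suc C))"]) (auto simp del: of_nat_Suc)
qed

end
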